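(* If $f,g:\mathbb{R}^{N}\rightarrow [0,\infty ]$ are Borel measurable, then $$\int_{\mathbb{R}^{N}}f\barwedge g\leq 2^{N-1}\left(\int_{\mathbb{R}^{N}}\hat{f}+\int_{\mathbb{R}^{N}}\hat{g}\right).$$
   Context: $(f\barwedge g)(x):=\sup_{y}\min\{f(x-y),g(y)\}$. Enclosing balls: for nonempty bounded $X\subset\mathbb{R}^N$, $\overline{B}_X$ is the unique closed ball of minimal diameter containing $X$; $\overline{B}_X:=\mathbb{R}^N$ if $X$ unbounded; $\overline{B}_\emptyset:=\{0\}$. For $f:\mathbb{R}^N\to[-\infty,\infty]$ and $\xi\in[-\infty,\infty]$, $\rho^+_f(\xi)\in[0,\infty]$ is the radius of $\overline{B}_{\{f>\xi\}}$, $\gamma^+_f(t):=\inf\{\xi:\rho^+_f(\xi)\le t\}$ for $t\in[0,\infty)$, and $\hat f(x):=\gamma^+_f(|x|)$ (a measurable function). *)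

theory Defs
  imports "HOL-Analysis.Analysis"
begin

definition supmin_conv :: "('a::euclidean_space \<Rightarrow> ennreal) \<Rightarrow> ('a \<Rightarrow> ennreal) \<Rightarrow> 'a \<Rightarrow> ennreal" where
  "supmin_conv f g x = (SUP y. min (f (x - y)) (g y))"

definition enc_radius :: "'a::euclidean_space set \<Rightarrow> ennreal" where
  "enc_radius X = (if X = {} then 0
                   else if bounded X then ennreal (Inf {r. \<exists>c. X \<subseteq> cball c r})
                   else \<infinity>)"

definition rho_plus :: "('a::euclidean_space \<Rightarrow> ereal) \<Rightarrow> ereal \<Rightarrow> ennreal" where
  "rho_plus f \<xi> = enc_radius {x. f x > \<xi>}"

definition gamma_plus :: "('a::euclidean_space \<Rightarrow> ereal) \<Rightarrow> real \<Rightarrow> ereal" where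
  "gamma_plus f t = Inf {\<xi>. rho_plus f \<xi> \<le> ennreal t}"

definition hat :: "('a::euclidean_space \<Rightarrow> ereal) \<Rightarrow> 'a \<Rightarrow> ereal" where
  "hat f x = gamma_plus f (norm x)"

end

theory Submission
  imports Defs
begin

text \<open>
  By the layer-cake formula it suffices to compare level sets. If (f barwedge g)(x) > t, then x
  lies in the Minkowski sum of {f > t} and {g > t}, whose enclosing radius is at most
  rho_f(t) + rho_g(t); hence its measure is at most
  w_N (rho_f(t) + rho_g(t))^N <= 2^(N-1) w_N (rho_f(t)^N + rho_g(t)^N) by convexity of r^N,
  where w_N is the volume of the unit ball. Conversely hat f >= t on the ball of radius rho_f(t),
  so w_N rho_f(t)^N is at most the measure of a level set of hat f; the gap between >= and > is
  closed by continuity of measure from below. Since f barwedge g need not be measurable, the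
  estimate is applied to the simple functions below it.
\<close>

lemma borel_measurable_antimono:
  fixes \<phi> :: "real \<Rightarrow> 'b::{linorder_topology, second_countable_topology}"
  assumes "\<And>a b. a \<le> b \<Longrightarrow> \<phi> b \<le> \<phi> a"
  shows "\<phi> \<in> borel_measurable borel"
proof (rule borel_measurableI_greater)
  fix y
  have "is_interval {x. y < \<phi> x}"
    unfolding is_interval_1 using assms by (blast intro: less_le_trans)
  then show "{x \<in> space borel. y < \<phi> x} \<in> sets borel"
    using real_interval_borel_measurable by simp
qed

lemma power_add_le_two_power:
  fixes a b :: "'a::linordered_idom"
  assumes "0 \<le> a" "0 \<le> b" "n \<ge> 1"
  shows "(a + b) ^ n \<le> 2 ^ (n - 1) * (a ^ n + b ^ n)"
  using assms(3)
proof (induction n rule: dec_induct)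
  case (step n)
  have "0 \<le> (a - b) * (a ^ n - b ^ n)"
    using assms power_mono[of a b n] power_mono[of b a n]
    by (cases "a \<le> b") (auto intro: mult_nonpos_nonpos)
  then have rearrangement: "a * b ^ n + b * a ^ n \<le> a ^ Suc n + b ^ Suc n"
    by (simp add: algebra_simps)
  have "(a + b) ^ Suc n \<le> (a + b) * (2 ^ (n - 1) * (a ^ n + b ^ n))"
    using step assms by (simp add: mult_left_mono)
  also have "\<dots> = 2 ^ (n - 1) * ((a + b) * (a ^ n + b ^ n))"
    by (simp add: algebra_simps)
  also have "\<dots> \<le> 2 ^ (n - 1) * (2 * (a ^ Suc n + b ^ Suc n))"
    using rearrangement by (intro mult_left_mono) (auto simp: algebra_simps)
  also have "\<dots> = 2 ^ (Suc n - 1) * (a ^ Suc n + b ^ Suc n)"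
    using step(1) by (cases n) auto
  finally show ?case .
qed simp

lemma ennreal_power_add_le_two_power:
  fixes a b :: ennreal
  assumes "n \<ge> 1"
  shows "(a + b) ^ n \<le> 2 ^ (n - 1) * (a ^ n + b ^ n)"
proof (cases "a = \<infinity> \<or> b = \<infinity>")
  case True
  then show ?thesis using assms by (auto simp: power_eq_top_ennreal ennreal_mult_top)
next
  case False
  then obtain a' b' where "a = ennreal a'" "b = ennreal b'" "0 \<le> a'" "0 \<le> b'"
    by (cases a rule: ennreal_cases; cases b rule: ennreal_cases) auto
  then have "(a + b) ^ n = ennreal ((a' + b') ^ n)"
    by (metis ennreal_plus ennreal_power add_nonneg_nonneg)
  moreover have "2 ^ (n - 1) * (a ^ n + b ^ n) = ennreal (2 ^ (n - 1) * (a' ^ n + b' ^ n))"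
    using \<open>a = ennreal a'\<close> \<open>b = ennreal b'\<close> \<open>0 \<le> a'\<close> \<open>0 \<le> b'\<close>
    by (simp add: ennreal_power[symmetric] ennreal_mult)
  ultimately show ?thesis
    using power_add_le_two_power[of a' b' n] assms \<open>0 \<le> a'\<close> \<open>0 \<le> b'\<close>
    by (simp del: ennreal_plus add: ennreal_leI)
qed

subsection \<open>Layer-cake representation\<close>

lemma emeasure_lborel_nonneg_less:
  "emeasure lborel {t::real. 0 \<le> t \<and> ennreal t < c} = c"
proof (cases c)
  case (real a)
  then have "{t::real. 0 \<le> t \<and> ennreal t < c} = {0..<a}"
    by (auto simp: ennreal_less_iff)
  then show ?thesis using real by simp
next
  case top
  have "of_nat n \<le> emeasure lborel {0::real..}" for n
    using emeasure_mono[of "{0..real n}" "{0::real..}" lborel]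
    by (simp add: ennreal_of_nat_eq_real_of_nat)
  then have "(SUP n. of_nat n) \<le> emeasure lborel {0::real..}"
    by (intro SUP_least)
  then have "emeasure lborel {0::real..} = \<infinity>"
    by (simp add: ennreal_SUP_of_nat_eq_top top_unique)
  moreover have "{t::real. 0 \<le> t \<and> ennreal t < c} = {0..}"
    using top by auto
  ultimately show ?thesis using top by simp
qed

lemma nn_integral_layer_cake:
  assumes "sigma_finite_measure M" and [measurable]: "h \<in> borel_measurable M"
  shows "(\<integral>\<^sup>+ x. h x \<partial>M) =
    (\<integral>\<^sup>+ t. indicator {0..} t * emeasure M {x \<in> space M. ennreal t < h x} \<partial>lborel)"
proof -
  interpret pair_sigma_finite M lborel
    using assms(1) by (simp add: pair_sigma_finite_def lborel.sigma_finite_measure_axioms)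
  define S where "S = {p \<in> space (M \<Otimes>\<^sub>M lborel). 0 \<le> snd p \<and> ennreal (snd p) < h (fst p)}"
  have "Measurable.pred (M \<Otimes>\<^sub>M lborel) (\<lambda>p. 0 \<le> snd p \<and> ennreal (snd p) < h (fst p))"
    by measurable
  then have [measurable]: "S \<in> sets (M \<Otimes>\<^sub>M lborel)"
    unfolding S_def pred_def by simp
  have "(\<integral>\<^sup>+ x. h x \<partial>M) = (\<integral>\<^sup>+ x. (\<integral>\<^sup>+ t. indicator S (x, t) \<partial>lborel) \<partial>M)"
  proof (rule nn_integral_cong)
    fix x assume "x \<in> space M"
    then have "(\<lambda>t. indicator S (x, t) :: ennreal) = indicator {t. 0 \<le> t \<and> ennreal t < h x}"
      by (auto simp: S_def indicator_def space_pair_measure)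
    then show "h x = (\<integral>\<^sup>+ t. indicator S (x, t) \<partial>lborel)"
      by (simp add: emeasure_lborel_nonneg_less)
  qed
  also have "\<dots> = (\<integral>\<^sup>+ t. (\<integral>\<^sup>+ x. indicator S (x, t) \<partial>M) \<partial>lborel)"
    by (rule Fubini'[symmetric]) measurable
  also have "\<dots> = (\<integral>\<^sup>+ t. indicator {0..} t * emeasure M {x \<in> space M. ennreal t < h x} \<partial>lborel)"
  proof (rule nn_integral_cong)
    fix t :: real
    have "(\<lambda>x. indicator S (x, t) :: ennreal)
        = (\<lambda>x. indicator {0..} t * indicator {x \<in> space M. ennreal t < h x} x)"
      by (auto simp: S_def indicator_def space_pair_measure)
    then show "(\<integral>\<^sup>+ x. indicator S (x, t) \<partial>M)
        = indicator {0..} t * emeasure M {x \<in> space M. ennreal t < h x}"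
      by (simp add: nn_integral_cmult_indicator)
  qed
  finally show ?thesis .
qed

lemma borel_measurable_emeasure_level:
  assumes [measurable]: "h \<in> borel_measurable M"
  shows "(\<lambda>t. emeasure M {x \<in> space M. ennreal t < h x}) \<in> borel_measurable borel"
  by (rule borel_measurable_antimono, rule emeasure_mono)
     (auto intro: le_less_trans ennreal_leI)

lemma nn_integral_le_of_level_sets:
  assumes M: "sigma_finite_measure M"
    and [measurable]: "s \<in> borel_measurable M" "h1 \<in> borel_measurable M" "h2 \<in> borel_measurable M"
    and level: "\<And>t. 0 \<le> t \<Longrightarrow> emeasure M {x \<in> space M. ennreal t < s x}
      \<le> c * (emeasure M {x \<in> space M. ennreal t < h1 x} + emeasure M {x \<in> space M. ennreal t < h2 x})"
  shows "(\<integral>\<^sup>+ x. s x \<partial>M) \<le> c * ((\<integral>\<^sup>+ x. h1 x \<partial>M) + (\<integral>\<^sup>+ x. h2 x \<partial>M))"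
proof -
  define L where "L h t = indicator {0..} t * emeasure M {x \<in> space M. ennreal t < h x}"
    for h :: "'a \<Rightarrow> ennreal" and t :: real
  have [measurable]: "L h \<in> borel_measurable borel" if "h \<in> borel_measurable M" for h
    using borel_measurable_emeasure_level[OF that] unfolding L_def by measurable
  have "(\<integral>\<^sup>+ x. s x \<partial>M) = (\<integral>\<^sup>+ t. L s t \<partial>lborel)"
    unfolding L_def by (rule nn_integral_layer_cake[OF M]) measurable
  also have "\<dots> \<le> (\<integral>\<^sup>+ t. c * (L h1 t + L h2 t) \<partial>lborel)"
    using level by (intro nn_integral_mono) (auto simp: L_def indicator_def)
  also have "\<dots> = c * ((\<integral>\<^sup>+ t. L h1 t \<partial>lborel) + (\<integral>\<^sup>+ t. L h2 t \<partial>lborel))"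
    by (simp add: nn_integral_cmult nn_integral_add)
  also have "\<dots> = c * ((\<integral>\<^sup>+ x. h1 x \<partial>M) + (\<integral>\<^sup>+ x. h2 x \<partial>M))"
    unfolding L_def using M by (simp add: nn_integral_layer_cake)
  finally show ?thesis .
qed

lemma emeasure_level_le_of_greater:
  assumes [measurable]: "s \<in> borel_measurable M" and "0 \<le> t"
    and greater: "\<And>t'. t < t' \<Longrightarrow> emeasure M {x \<in> space M. ennreal t' < s x} \<le> c"
  shows "emeasure M {x \<in> space M. ennreal t < s x} \<le> c"
proof -
  define A where "A n = {x \<in> space M. ennreal (t + inverse (Suc n)) < s x}" for n
  have "incseq A"
  proof (rule incseq_SucI)
    fix n
    have "ennreal (t + inverse (Suc (Suc n))) \<le> ennreal (t + inverse (Suc n))"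
      by (intro ennreal_leI add_left_mono le_imp_inverse_le) auto
    then show "A n \<subseteq> A (Suc n)" unfolding A_def by (auto intro: le_less_trans)
  qed
  moreover have "{x \<in> space M. ennreal t < s x} = (\<Union>n. A n)"
  proof (intro set_eqI iffI)
    fix x assume "x \<in> {x \<in> space M. ennreal t < s x}"
    then obtain z where z: "x \<in> space M" "ennreal t < z" "z < s x"
      using dense by blast
    then obtain r where r: "z = ennreal r" "t < r"
      using \<open>0 \<le> t\<close> by (cases z rule: ennreal_cases) (auto simp: ennreal_less_iff)
    then obtain n where "inverse (Suc n) < r - t"
      using reals_Archimedean[of "r - t"] by auto
    then have "ennreal (t + inverse (Suc n)) < ennreal r"
      using \<open>0 \<le> t\<close> \<open>t < r\<close> by (intro ennreal_lessI) auto
    then have "ennreal (t + inverse (Suc n)) < s x"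
      using z r by (metis less_trans)
    then show "x \<in> (\<Union>n. A n)" using z unfolding A_def by blast
  next
    fix x assume "x \<in> (\<Union>n. A n)"
    then obtain n where "x \<in> space M" "ennreal (t + inverse (Suc n)) < s x"
      unfolding A_def by blast
    moreover have "ennreal t \<le> ennreal (t + inverse (Suc n))"
      by (intro ennreal_leI) simp
    ultimately show "x \<in> {x \<in> space M. ennreal t < s x}"
      using le_less_trans by blast
  qed
  moreover have "A n \<in> sets M" for n
    unfolding A_def by measurable
  ultimately have "emeasure M {x \<in> space M. ennreal t < s x} = (SUP n. emeasure M (A n))"
    by (simp add: SUP_emeasure_incseq image_subset_iff)
  also have "\<dots> \<le> c"
    unfolding A_def by (intro SUP_least greater) simp
  finally show ?thesis .
qed

subsection \<open>Enclosing radii\<close>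

lemma nonempty_subset_cball_radius_nonneg:
  fixes X :: "'a::metric_space set"
  assumes "X \<noteq> {}" "X \<subseteq> cball c r"
  shows "0 \<le> r"
  using assms by (metis cball_eq_empty not_less subset_empty)

lemma enc_radius_empty [simp]: "enc_radius {} = 0"
  by (simp add: enc_radius_def)

lemma enc_radius_le_cball:
  fixes X :: "'a::euclidean_space set"
  assumes "X \<subseteq> cball c r"
  shows "enc_radius X \<le> ennreal r"
proof (cases "X = {}")
  case False
  have "bdd_below {r. \<exists>c. X \<subseteq> cball c r}"
    using nonempty_subset_cball_radius_nonneg[OF False] by (intro bdd_belowI) blast
  moreover have "bounded X"
    using assms bounded_cball bounded_subset by blast
  ultimately have "Inf {r. \<exists>c. X \<subseteq> cball c r} \<le> r"
    using assms by (intro cInf_lower) blast+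
  then show ?thesis
    using False \<open>bounded X\<close> by (simp add: enc_radius_def ennreal_leI)
qed (simp add: enc_radius_def)

lemma enc_radius_le_of_cball_covers:
  fixes X :: "'a::euclidean_space set"
  assumes "\<And>e. e > 0 \<Longrightarrow> \<exists>c. X \<subseteq> cball c (r + e)" and "0 \<le> r"
  shows "enc_radius X \<le> ennreal r"
proof (rule ennreal_le_epsilon)
  fix e :: real assume "0 < e"
  then obtain c where "X \<subseteq> cball c (r + e)" using assms(1) by blast
  then have "enc_radius X \<le> ennreal (r + e)" by (rule enc_radius_le_cball)
  then show "enc_radius X \<le> ennreal r + ennreal e" using \<open>0 < e\<close> assms(2) by simp
qed

lemma cball_cover_enc_radius:
  fixes X :: "'a::euclidean_space set"
  assumes "X \<noteq> {}" "enc_radius X \<noteq> \<infinity>" "e > 0"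
  obtains c where "X \<subseteq> cball c (enn2real (enc_radius X) + e)"
proof -
  let ?S = "{r. \<exists>c. X \<subseteq> cball c r}"
  have "bounded X"
  proof (rule ccontr)
    assume "\<not> bounded X"
    then have "enc_radius X = \<infinity>" using assms(1) by (simp add: enc_radius_def)
    with assms(2) show False ..
  qed
  then obtain c b where "X \<subseteq> cball c b"
    using bounded_subset_cball by blast
  then have "?S \<noteq> {}" by blast
  have nonneg: "\<forall>r\<in>?S. 0 \<le> r"
    using nonempty_subset_cball_radius_nonneg[OF assms(1)] by blast
  then have "bdd_below ?S" by (intro bdd_belowI) blast
  have "0 \<le> Inf ?S" using \<open>?S \<noteq> {}\<close> nonneg by (intro cInf_greatest) auto
  moreover have "enc_radius X = ennreal (Inf ?S)"
    using assms(1) \<open>bounded X\<close> by (simp add: enc_radius_def)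
  ultimately have radius: "enn2real (enc_radius X) = Inf ?S"
    by simp
  have "Inf ?S < Inf ?S + e" using assms(3) by simp
  then obtain r where "r \<in> ?S" "r < Inf ?S + e"
    using cInf_less_iff[OF \<open>?S \<noteq> {}\<close> \<open>bdd_below ?S\<close>] by blast
  then obtain c where "X \<subseteq> cball c r" by blast
  also have "cball c r \<subseteq> cball c (Inf ?S + e)"
    using \<open>r < Inf ?S + e\<close> by (intro subset_cball) simp
  finally show ?thesis using that radius by simp
qed

lemma enc_radius_mono:
  fixes X Y :: "'a::euclidean_space set"
  assumes "X \<subseteq> Y"
  shows "enc_radius X \<le> enc_radius Y"
proof (cases "X = {} \<or> enc_radius Y = \<infinity>")
  case True
  then show ?thesis by auto
next
  case False
  then have "Y \<noteq> {}" "enc_radius Y \<noteq> \<infinity>" using assms by auto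
  have "enc_radius X \<le> ennreal (enn2real (enc_radius Y))"
  proof (rule enc_radius_le_of_cball_covers)
    fix e :: real assume "e > 0"
    then obtain c where "Y \<subseteq> cball c (enn2real (enc_radius Y) + e)"
      using cball_cover_enc_radius \<open>Y \<noteq> {}\<close> \<open>enc_radius Y \<noteq> \<infinity>\<close> by blast
    then show "\<exists>c. X \<subseteq> cball c (enn2real (enc_radius Y) + e)" using assms by blast
  qed simp
  then show ?thesis using \<open>enc_radius Y \<noteq> \<infinity>\<close> by (simp add: less_top)
qed

lemma enc_radius_set_plus_le:
  fixes A B :: "'a::euclidean_space set"
  shows "enc_radius {a + b |a b. a \<in> A \<and> b \<in> B} \<le> enc_radius A + enc_radius B"
proof (cases "A = {} \<or> B = {} \<or> enc_radius A = \<infinity> \<or> enc_radius B = \<infinity>")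
  case True
  then show ?thesis by auto
next
  case False
  define rA rB where "rA = enn2real (enc_radius A)" and "rB = enn2real (enc_radius B)"
  have "enc_radius {a + b |a b. a \<in> A \<and> b \<in> B} \<le> ennreal (rA + rB)"
  proof (rule enc_radius_le_of_cball_covers)
    fix e :: real assume "e > 0"
    then obtain cA cB where cA: "A \<subseteq> cball cA (rA + e/2)" and cB: "B \<subseteq> cball cB (rB + e/2)"
      using False cball_cover_enc_radius[of A "e/2"] cball_cover_enc_radius[of B "e/2"]
      unfolding rA_def rB_def by (metis half_gt_zero)
    have "a + b \<in> cball (cA + cB) (rA + rB + e)" if "a \<in> A" "b \<in> B" for a b
    proof -
      have "dist cA a \<le> rA + e/2" "dist cB b \<le> rB + e/2" using that cA cB by auto
      moreover have "dist (cA + cB) (a + b) \<le> dist cA a + dist cB b"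
        using norm_triangle_ineq[of "cA - a" "cB - b"] by (simp add: dist_norm algebra_simps)
      ultimately show ?thesis by simp
    qed
    then show "\<exists>c. {a + b |a b. a \<in> A \<and> b \<in> B} \<subseteq> cball c (rA + rB + e)" by blast
  qed (simp add: rA_def rB_def)
  then show ?thesis
    using False by (simp add: rA_def rB_def less_top)
qed

subsection \<open>Volume bounds\<close>

lemma emeasure_le_of_cball_covers:
  fixes X :: "'a::euclidean_space set"
  assumes "X \<in> sets lborel" and "0 \<le> R"
    and cover: "\<And>e. e > 0 \<Longrightarrow> \<exists>c. X \<subseteq> cball c (R + e)"
  shows "emeasure lborel X \<le> ennreal (unit_ball_vol DIM('a) * R ^ DIM('a))"
proof -
  let ?V = "\<lambda>r. ennreal (unit_ball_vol DIM('a) * r ^ DIM('a))"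
  have "((\<lambda>e. unit_ball_vol DIM('a) * (R + e) ^ DIM('a)) \<longlongrightarrow> unit_ball_vol DIM('a) * (R + 0) ^ DIM('a)) (at_right 0)"
    by (intro tendsto_intros)
  then have "((\<lambda>e. ?V (R + e)) \<longlongrightarrow> ?V R) (at_right 0)"
    by (intro tendsto_ennrealI) simp
  moreover have "eventually (\<lambda>e. emeasure lborel X \<le> ?V (R + e)) (at_right 0)"
    using eventually_at_right_less[of "0::real"]
  proof (rule eventually_mono)
    fix e :: real assume "0 < e"
    then obtain c where "X \<subseteq> cball c (R + e)" using cover by blast
    then have "emeasure lborel X \<le> emeasure lborel (cball c (R + e))"
      by (intro emeasure_mono) auto
    then show "emeasure lborel X \<le> ?V (R + e)"
      using emeasure_cball[of "R + e" c] \<open>0 \<le> R\<close> \<open>0 < e\<close> by simp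
  qed
  ultimately show ?thesis
    using tendsto_le[OF trivial_limit_at_right_real] tendsto_const by blast
qed

lemma emeasure_le_enc_radius:
  fixes X :: "'a::euclidean_space set"
  assumes "X \<in> sets lborel"
  shows "emeasure lborel X \<le> ennreal (unit_ball_vol DIM('a)) * enc_radius X ^ DIM('a)"
proof (cases "X = {} \<or> enc_radius X = \<infinity>")
  case True
  have "ennreal (unit_ball_vol DIM('a)) \<noteq> 0"
    using unit_ball_vol_pos[of "real DIM('a)"] by (metis ennreal_eq_0_iff not_le of_nat_0_le_iff)
  with True show ?thesis
    by (auto simp: power_eq_top_ennreal ennreal_mult_top)
next
  case False
  define R where "R = enn2real (enc_radius X)"
  have "emeasure lborel X \<le> ennreal (unit_ball_vol DIM('a) * R ^ DIM('a))"
    using assms False cball_cover_enc_radius[of X] unfolding R_def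
    by (intro emeasure_le_of_cball_covers) auto
  also have "\<dots> = ennreal (unit_ball_vol DIM('a)) * enc_radius X ^ DIM('a)"
    using False by (simp add: R_def ennreal_mult ennreal_power[symmetric] less_top)
  finally show ?thesis .
qed

lemma emeasure_ge_of_ball_subset:
  fixes H :: "'a::euclidean_space set"
  assumes "H \<in> sets lborel" and ball: "\<And>x. ennreal (norm x) < r \<Longrightarrow> x \<in> H"
  shows "ennreal (unit_ball_vol DIM('a)) * r ^ DIM('a) \<le> emeasure lborel H"
proof (cases r)
  case (real R)
  have "ball 0 R \<subseteq> H"
    using ball real by (auto simp: ennreal_less_iff)
  then have "emeasure lborel (ball (0::'a) R) \<le> emeasure lborel H"
    using assms(1) by (intro emeasure_mono)
  then show ?thesis
    using real by (simp add: emeasure_ball ennreal_mult ennreal_power)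
next
  case top
  then have "H = UNIV" using ball by auto
  then show ?thesis using top by simp
qed

subsection \<open>The symmetric decreasing rearrangement\<close>

lemma rho_plus_antimono: "\<xi> \<le> \<eta> \<Longrightarrow> rho_plus F \<eta> \<le> rho_plus F \<xi>"
  unfolding rho_plus_def by (rule enc_radius_mono) auto

lemma rho_plus_enn2ereal:
  assumes "0 \<le> t"
  shows "rho_plus (\<lambda>y. enn2ereal (f y)) (ereal t) = enc_radius {y. ennreal t < f y}"
  using assms unfolding rho_plus_def by (simp add: less_ennreal.rep_eq enn2ereal_ennreal)

lemma le_hat:
  assumes "ennreal (norm x) < rho_plus F \<xi>"
  shows "\<xi> \<le> hat F x"
  unfolding hat_def gamma_plus_def
proof (rule Inf_greatest)
  fix \<eta> assume "\<eta> \<in> {\<eta>. rho_plus F \<eta> \<le> ennreal (norm x)}"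
  then have "rho_plus F \<eta> \<le> ennreal (norm x)" by simp
  show "\<xi> \<le> \<eta>"
  proof (rule ccontr)
    assume "\<not> \<xi> \<le> \<eta>"
    then have "rho_plus F \<xi> \<le> rho_plus F \<eta>" by (intro rho_plus_antimono) simp
    with \<open>rho_plus F \<eta> \<le> ennreal (norm x)\<close> assms show False
      by (metis leD order.trans)
  qed
qed

lemma borel_measurable_hat:
  "(\<lambda>x. e2ennreal (hat F x)) \<in> borel_measurable borel"
proof -
  have "(\<lambda>r. e2ennreal (gamma_plus F r)) \<in> borel_measurable borel"
  proof (rule borel_measurable_antimono)
    fix a b :: real assume "a \<le> b"
    then have "{\<xi>. rho_plus F \<xi> \<le> ennreal a} \<subseteq> {\<xi>. rho_plus F \<xi> \<le> ennreal b}"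
      by (auto intro: order_trans ennreal_leI)
    then show "e2ennreal (gamma_plus F b) \<le> e2ennreal (gamma_plus F a)"
      unfolding gamma_plus_def by (intro e2ennreal_mono Inf_superset_mono)
  qed
  then show ?thesis
    unfolding hat_def by (rule measurable_compose[OF borel_measurable_norm])
qed

lemma emeasure_hat_level_ge:
  fixes f :: "'a::euclidean_space \<Rightarrow> ennreal"
  assumes "0 \<le> t" "t < t'"
  shows "ennreal (unit_ball_vol DIM('a)) * enc_radius {y. ennreal t' < f y} ^ DIM('a)
    \<le> emeasure lborel {x. ennreal t < e2ennreal (hat (\<lambda>y. enn2ereal (f y)) x)}"
proof (rule emeasure_ge_of_ball_subset)
  show "{x. ennreal t < e2ennreal (hat (\<lambda>y. enn2ereal (f y)) x)} \<in> sets lborel"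
    using borel_measurable_hat by measurable
next
  fix x :: 'a assume "ennreal (norm x) < enc_radius {y. ennreal t' < f y}"
  then have "ereal t' \<le> hat (\<lambda>y. enn2ereal (f y)) x"
    using assms by (intro le_hat) (simp add: rho_plus_enn2ereal)
  then have "ennreal t' \<le> e2ennreal (hat (\<lambda>y. enn2ereal (f y)) x)"
    using e2ennreal_mono by (fastforce simp: e2ennreal_ereal)
  moreover have "ennreal t < ennreal t'"
    using assms by (intro ennreal_lessI) auto
  ultimately show "x \<in> {x. ennreal t < e2ennreal (hat (\<lambda>y. enn2ereal (f y)) x)}"
    by simp
qed

subsection \<open>The level-set estimate\<close>

lemma supmin_conv_level_subset:
  fixes f g :: "'a::euclidean_space \<Rightarrow> ennreal"
  shows "{x. c < supmin_conv f g x} \<subseteq> {a + b |a b. a \<in> {y. c < f y} \<and> b \<in> {y. c < g y}}"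
proof
  fix x assume "x \<in> {x. c < supmin_conv f g x}"
  then obtain y where "c < min (f (x - y)) (g y)"
    by (auto simp: supmin_conv_def less_SUP_iff)
  then show "x \<in> {a + b |a b. a \<in> {y. c < f y} \<and> b \<in> {y. c < g y}}"
    by force
qed

lemma emeasure_level_le_supmin_conv:
  fixes f g s :: "'a::euclidean_space \<Rightarrow> ennreal"
  assumes [measurable]: "s \<in> borel_measurable borel"
    and s_le: "\<And>x. s x \<le> supmin_conv f g x" and "0 \<le> t" "t < t'"
  shows "emeasure lborel {x. ennreal t' < s x} \<le> 2 ^ (DIM('a) - 1) *
    (emeasure lborel {x. ennreal t < e2ennreal (hat (\<lambda>y. enn2ereal (f y)) x)}
     + emeasure lborel {x. ennreal t < e2ennreal (hat (\<lambda>y. enn2ereal (g y)) x)})"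
proof -
  let ?N = "DIM('a)" and ?K = "ennreal (unit_ball_vol DIM('a))"
  define rf rg where "rf = enc_radius {y. ennreal t' < f y}" and "rg = enc_radius {y. ennreal t' < g y}"
  have "{x. ennreal t' < s x} \<subseteq> {x. ennreal t' < supmin_conv f g x}"
    using s_le by (auto intro: less_le_trans)
  also note supmin_conv_level_subset
  finally have "enc_radius {x. ennreal t' < s x} \<le> rf + rg"
    unfolding rf_def rg_def by (intro order.trans[OF enc_radius_mono enc_radius_set_plus_le])
  then have "?K * enc_radius {x. ennreal t' < s x} ^ ?N \<le> ?K * (rf + rg) ^ ?N"
    by (intro mult_left_mono power_mono) simp_all
  then have "emeasure lborel {x. ennreal t' < s x} \<le> ?K * (rf + rg) ^ ?N"
    using emeasure_le_enc_radius[of "{x. ennreal t' < s x}"] by simp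
  also have "\<dots> \<le> ?K * (2 ^ (?N - 1) * (rf ^ ?N + rg ^ ?N))"
    using ennreal_power_add_le_two_power[of ?N rf rg] DIM_positive
    by (intro mult_left_mono) (simp_all add: Suc_leI)
  also have "\<dots> = 2 ^ (?N - 1) * (?K * rf ^ ?N + ?K * rg ^ ?N)"
    by (simp add: algebra_simps)
  also have "\<dots> \<le> 2 ^ (?N - 1) *
    (emeasure lborel {x. ennreal t < e2ennreal (hat (\<lambda>y. enn2ereal (f y)) x)}
     + emeasure lborel {x. ennreal t < e2ennreal (hat (\<lambda>y. enn2ereal (g y)) x)})"
    unfolding rf_def rg_def using assms(3,4)
    by (intro mult_left_mono add_mono emeasure_hat_level_ge) auto
  finally show ?thesis .
qed

lemma simple_integral_le_hat_integrals:
  fixes f g s :: "'a::euclidean_space \<Rightarrow> ennreal"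
  assumes s: "simple_function lborel s" and s_le: "\<And>x. s x \<le> supmin_conv f g x"
  shows "integral\<^sup>S lborel s \<le> 2 ^ (DIM('a) - 1) *
    ((\<integral>\<^sup>+ x. e2ennreal (hat (\<lambda>y. enn2ereal (f y)) x) \<partial>lborel)
     + (\<integral>\<^sup>+ x. e2ennreal (hat (\<lambda>y. enn2ereal (g y)) x) \<partial>lborel))"
proof -
  define F G where "F = (\<lambda>x. e2ennreal (hat (\<lambda>y. enn2ereal (f y)) x))"
    and "G = (\<lambda>x. e2ennreal (hat (\<lambda>y. enn2ereal (g y)) x))"
  have F_G_measurable: "F \<in> borel_measurable lborel" "G \<in> borel_measurable lborel"
    unfolding F_def G_def using borel_measurable_hat by simp_all
  have s_measurable: "s \<in> borel_measurable lborel"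
    using borel_measurable_simple_function[OF s] .
  have "emeasure lborel {x \<in> space lborel. ennreal t < s x}
    \<le> 2 ^ (DIM('a) - 1) * (emeasure lborel {x \<in> space lborel. ennreal t < F x}
                           + emeasure lborel {x \<in> space lborel. ennreal t < G x})"
    if "0 \<le> t" for t
  proof (rule emeasure_level_le_of_greater[OF s_measurable that])
    fix t' assume "t < t'"
    then show "emeasure lborel {x \<in> space lborel. ennreal t' < s x}
      \<le> 2 ^ (DIM('a) - 1) * (emeasure lborel {x \<in> space lborel. ennreal t < F x}
                             + emeasure lborel {x \<in> space lborel. ennreal t < G x})"
      using emeasure_level_le_supmin_conv[OF _ s_le that] s_measurable
      by (simp add: F_def G_def)
  qed
  then have "integral\<^sup>N lborel s \<le> 2 ^ (DIM('a) - 1) * (integral\<^sup>N lborel F + integral\<^sup>N lborel G)"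
    by (rule nn_integral_le_of_level_sets[OF lborel.sigma_finite_measure_axioms
                                             s_measurable F_G_measurable])
  then show ?thesis
    using nn_integral_eq_simple_integral[OF s] by (simp add: F_def G_def)
qed

theorem lemma15:
  fixes f g :: "'a::euclidean_space \<Rightarrow> ennreal"
  assumes "f \<in> borel_measurable borel" and "g \<in> borel_measurable borel"
  shows "(\<integral>\<^sup>+ x. supmin_conv f g x \<partial>lebesgue)
           \<le> 2 ^ (DIM('a) - 1) *
             ((\<integral>\<^sup>+ x. e2ennreal (hat (\<lambda>y. enn2ereal (f y)) x) \<partial>lebesgue)
              + (\<integral>\<^sup>+ x. e2ennreal (hat (\<lambda>y. enn2ereal (g y)) x) \<partial>lebesgue))"
  unfolding nn_integral_completion nn_integral_def[of lborel "supmin_conv f g"]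
  by (intro SUP_least simple_integral_le_hat_integrals) (simp_all add: le_fun_def)

end
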